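(* Let $X$ be a nonempty set, $S$ a semigroup, and $\phi:\Gamma(X)\to E(S^1)$ a skeleton mapping. Then there is a unique semigroup homomorphism $\psi:FT^1(X)\to S^1$ such that $[g]\psi=g\phi$ for all $g\in\Gamma(X)$. Furthermore, the subsemigroup $\langle \Gamma(X)\phi\rangle=(FT^1(X))\psi$ of $S^1$ is a regular monoid with identity element $1\phi$.
   Context: Let $1$ be a symbol not in $X$. Elements of height $\ge 2$ are triples $g=(g^l,g^c,g^r)$. Set $\Gamma_0(X)=\{1\}$, $\Gamma_1(X)=X$, identify each $x\in X$ with $(1,x,1)$. For $i\ge 2$, $\Gamma_i(X)$ is the set of triples $g\in\Gamma_{i-1}(X)\times\Gamma_{i-2}(X)\times\Gamma_{i-1}(X)$ with $g^l\neq g^r$ and $g^c\in\{(g^l)^l,(g^l)^r\}\cap\{(g^r)^l,(g^r)^r\}$. $\Gamma(X)=\bigcup_{i\ge0}\Gamma_i(X)$. Let $\rho$ be the smallest congruence on $\Gamma(X)^+$ containing $(1g,g),(g1,g),(gg,g)$ for all $g\in\Gamma(X)$, and $(g^cg^lg,g)$, $(gg^rg^c,g)$, $(g^rg^cgg^cg^l,\,g^rg^cg^l)$ for all $g\in\Gamma_i(X)$, $i\ge2$. $FT^1(X)=\Gamma(X)^+/\rho$, $[u]$ the class of $u$. $S^1$ is $S$ with an identity adjoined if necessary; $E(\cdot)$ denotes the set of idempotents. For idempotents $e,f$ of a semigroup $R$, the sandwich set is $S(e,f)=\{h\in E(R): fh=h=he,\ ehf=ef\}$. A skeleton mapping is a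 mapping $\phi:\Gamma(X)\to E(S^1)$ such that (i) $\phi|_X$ is one-to-one with $X\phi\subseteq E(S)$; (ii) $(1\phi)(g\phi)=g\phi=(g\phi)(1\phi)$ for all $g\in X$; (iii) $g\phi\in S\big((g^r\phi)(g^c\phi),(g^c\phi)(g^l\phi)\big)$ (sandwich set in $S^1$) for all $g\in\Gamma_i(X)$ with $i\ge2$. *)

theory Defs
  imports Main
begin

text \<open>Elements of Gamma(X): the symbol 1 (One), generators x (Gen x, identified with (1,x,1)),
  and triples (g^l, g^c, g^r) (Tr l c r).\<close>
datatype 'x gam = One | Gen 'x | Tr "'x gam" "'x gam" "'x gam"

text \<open>Components; for a generator x = (1,x,1) we have x^l = 1, x^c = x, x^r = 1.
  The value at One is irrelevant (never used).\<close>
fun gl :: "'x gam \<Rightarrow> 'x gam" where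
  "gl (Tr l c r) = l" | "gl (Gen x) = One" | "gl One = One"
fun gc :: "'x gam \<Rightarrow> 'x gam" where
  "gc (Tr l c r) = c" | "gc (Gen x) = Gen x" | "gc One = One"
fun gr :: "'x gam \<Rightarrow> 'x gam" where
  "gr (Tr l c r) = r" | "gr (Gen x) = One" | "gr One = One"

fun Gam :: "'x set \<Rightarrow> nat \<Rightarrow> 'x gam set" where
  "Gam X 0 = {One}"
| "Gam X (Suc 0) = Gen ` X"
| "Gam X (Suc (Suc i)) =
     {Tr l c r | l c r. l \<in> Gam X (Suc i) \<and> c \<in> Gam X i \<and> r \<in> Gam X (Suc i) \<and> l \<noteq> r
        \<and> c \<in> {gl l, gr l} \<inter> {gl r, gr r}}"

definition GamAll :: "'x set \<Rightarrow> 'x gam set" where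
  "GamAll X = (\<Union>i. Gam X i)"

definition GPlus :: "'x set \<Rightarrow> 'x gam list set" where
  "GPlus X = {w. w \<noteq> [] \<and> set w \<subseteq> GamAll X}"

inductive rho :: "'x set \<Rightarrow> 'x gam list \<Rightarrow> 'x gam list \<Rightarrow> bool" for X where
  gen1: "g \<in> GamAll X \<Longrightarrow> rho X [One, g] [g]"
| gen2: "g \<in> GamAll X \<Longrightarrow> rho X [g, One] [g]"
| gen3: "g \<in> GamAll X \<Longrightarrow> rho X [g, g] [g]"
| gen4: "2 \<le> i \<Longrightarrow> g \<in> Gam X i \<Longrightarrow> rho X [gc g, gl g, g] [g]"
| gen5: "2 \<le> i \<Longrightarrow> g \<in> Gam X i \<Longrightarrow> rho X [g, gr g, gc g] [g]"
| gen6: "2 \<le> i \<Longrightarrow> g \<in> Gam X i \<Longrightarrow>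
          rho X [gr g, gc g, g, gc g, gl g] [gr g, gc g, gl g]"
| refl: "u \<in> GPlus X \<Longrightarrow> rho X u u"
| sym: "rho X u v \<Longrightarrow> rho X v u"
| trans: "rho X u v \<Longrightarrow> rho X v w \<Longrightarrow> rho X u w"
| cong_left: "rho X u v \<Longrightarrow> w \<in> GPlus X \<Longrightarrow> rho X (w @ u) (w @ v)"
| cong_right: "rho X u v \<Longrightarrow> w \<in> GPlus X \<Longrightarrow> rho X (u @ w) (v @ w)"

text \<open>The class [u] and the carrier of FT^1(X) = Gamma(X)^+ / rho.
  Multiplication in FT^1(X) is [u][v] = [uv].\<close>
definition rho_class :: "'x set \<Rightarrow> 'x gam list \<Rightarrow> 'x gam list set" where
  "rho_class X u = {v. rho X u v}"

definition FT :: "'x set \<Rightarrow> 'x gam list set set" where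
  "FT X = rho_class X ` GPlus X"

text \<open>S^1 is represented inside 'a option: Some s for s in S, and None is the adjoined
  identity, present only if S has no identity.\<close>
fun mult1 :: "'a::semigroup_mult option \<Rightarrow> 'a option \<Rightarrow> 'a option" where
  "mult1 None y = y"
| "mult1 (Some a) None = Some a"
| "mult1 (Some a) (Some b) = Some (a * b)"

definition has_identity :: "'a::semigroup_mult itself \<Rightarrow> bool" where
  "has_identity _ = (\<exists>e::'a. \<forall>s. e * s = s \<and> s * e = s)"

definition S1 :: "'a::semigroup_mult option set" where
  "S1 = (if has_identity TYPE('a) then range Some else insert None (range Some))"

definition E1 :: "'a::semigroup_mult option set" where
  "E1 = {e \<in> S1. mult1 e e = e}"

definition ES :: "'a::semigroup_mult set" where
  "ES = {e. e * e = e}"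

definition sandwich :: "'a::semigroup_mult option \<Rightarrow> 'a option \<Rightarrow> 'a option set" where
  "sandwich e f = {h \<in> E1. mult1 f h = h \<and> mult1 h e = h \<and> mult1 (mult1 e h) f = mult1 e f}"

definition skeleton :: "'x set \<Rightarrow> ('x gam \<Rightarrow> 'a::semigroup_mult option) \<Rightarrow> bool" where
  "skeleton X \<phi> \<longleftrightarrow>
     (\<forall>g \<in> GamAll X. \<phi> g \<in> E1)
   \<and> inj_on (\<lambda>x. \<phi> (Gen x)) X
   \<and> (\<forall>x \<in> X. \<phi> (Gen x) \<in> Some ` ES)
   \<and> (\<forall>x \<in> X. mult1 (\<phi> One) (\<phi> (Gen x)) = \<phi> (Gen x) \<and> mult1 (\<phi> (Gen x)) (\<phi> One) = \<phi> (Gen x))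
   \<and> (\<forall>i \<ge> 2. \<forall>g \<in> Gam X i.
        \<phi> g \<in> sandwich (mult1 (\<phi> (gr g)) (\<phi> (gc g))) (mult1 (\<phi> (gc g)) (\<phi> (gl g))))"

definition ft_hom :: "'x set \<Rightarrow> ('x gam list set \<Rightarrow> 'a::semigroup_mult option) \<Rightarrow> bool" where
  "ft_hom X \<psi> \<longleftrightarrow> (\<forall>c \<in> FT X. \<psi> c \<in> S1)
     \<and> (\<forall>u \<in> GPlus X. \<forall>v \<in> GPlus X.
          \<psi> (rho_class X (u @ v)) = mult1 (\<psi> (rho_class X u)) (\<psi> (rho_class X v)))"

inductive_set sgen :: "'a::semigroup_mult option set \<Rightarrow> 'a option set" for A where
  base: "a \<in> A \<Longrightarrow> a \<in> sgen A"
| mult: "a \<in> sgen A \<Longrightarrow> b \<in> sgen A \<Longrightarrow> mult1 a b \<in> sgen A"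

definition regular_monoid_with_id :: "'a::semigroup_mult option set \<Rightarrow> 'a option \<Rightarrow> bool" where
  "regular_monoid_with_id M e \<longleftrightarrow>
     (\<forall>a \<in> M. \<forall>b \<in> M. mult1 a b \<in> M)
   \<and> e \<in> M \<and> (\<forall>a \<in> M. mult1 e a = a \<and> mult1 a e = a)
   \<and> (\<forall>a \<in> M. \<exists>b \<in> M. mult1 (mult1 a b) a = a)"

end

theory Submission
  imports Defs
begin

(*
  The homomorphism is forced: psi [u] has to be the product of the phi-images of the letters
  of u, and it is well defined because every defining pair of rho becomes an identity in S^1
  under phi; the last three are exactly the sandwich conditions of a skeleton mapping.

  Call a word a mountain if it climbs through Gamma(X),
  each letter being the left or right component of the next one, up to a peak p and then
  descends in the same way. Since phi p * phi d * phi p = phi p for every component d of p,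
  the image a of a mountain and the image b of the reversed word satisfy a * b * a = a.
  Conversely, every element phi 1 * phi g1 * ... * phi gn of the generated subsemigroup is the
  image of a mountain: walk from 1 up to each g_i and back down to 1. When a climb from e to v
  follows a descent from q to e with q different from v, the element (v, e, q) of Gamma(X)
  serves as a new peak, because phi q * phi (v,e,q) * phi v = phi q * phi e * phi v.
*)

(* None is adjoined as identity whether or not S has one, so 1 = None need not lie in S1;
   below, products of phi are only taken over nonempty words. *)
instantiation option :: (semigroup_mult) monoid_mult
begin

definition one_option :: "'a option" where
  "one_option = None"

definition times_option :: "'a option \<Rightarrow> 'a option \<Rightarrow> 'a option" where
  "times_option = mult1"

instance
proof
  fix a b c :: "'a option"
  show "a * b * c = a * (b * c)"
    unfolding times_option_def by (cases a; cases b; cases c) (simp_all add: mult.assoc)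
  show "1 * a = a" "a * 1 = a"
    unfolding times_option_def one_option_def by (cases a; simp)+
qed

end

lemma mult1_eq_times: "mult1 a b = a * b"
  by (simp add: times_option_def)

lemma S1_times: "a \<in> S1 \<Longrightarrow> b \<in> S1 \<Longrightarrow> a * b \<in> S1"
  unfolding S1_def times_option_def by (cases a; cases b) (auto split: if_splits)

lemma sgen_subset_S1:
  assumes "A \<subseteq> S1"
  shows "sgen A \<subseteq> S1"
proof
  fix a assume "a \<in> sgen A"
  then show "a \<in> S1" using assms by induction (auto simp: mult1_eq_times S1_times)
qed

lemma sgen_image_eq:
  "sgen (f ` G) = {prod_list (map f u) | u. u \<noteq> [] \<and> set u \<subseteq> G}"
proof (intro equalityI subsetI)
  fix a assume "a \<in> sgen (f ` G)"
  then show "a \<in> {prod_list (map f u) | u. u \<noteq> [] \<and> set u \<subseteq> G}"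
  proof (induction rule: sgen.induct)
    case (base a)
    then obtain g where "g \<in> G" "a = f g" by blast
    then show ?case by (intro CollectI exI[of _ "[g]"]) simp
  next
    case (mult a b)
    then obtain u v where "u \<noteq> []" "set u \<subseteq> G" "a = prod_list (map f u)"
      and "v \<noteq> []" "set v \<subseteq> G" "b = prod_list (map f v)" by blast
    then show ?case by (intro CollectI exI[of _ "u @ v"]) (simp add: mult1_eq_times)
  qed
next
  fix a assume "a \<in> {prod_list (map f u) | u. u \<noteq> [] \<and> set u \<subseteq> G}"
  then obtain u where "u \<noteq> []" "set u \<subseteq> G" "a = prod_list (map f u)" by blast
  then show "a \<in> sgen (f ` G)"
  proof (induction u arbitrary: a rule: list_nonempty_induct)
    case (cons g u)
    then have "f g \<in> sgen (f ` G)" "prod_list (map f u) \<in> sgen (f ` G)"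
      by (auto intro: sgen.base)
    then show ?case using cons.prems by (simp flip: mult1_eq_times add: sgen.mult)
  qed (auto intro: sgen.base)
qed

lemma One_in_Gam_iff [simp]: "One \<in> Gam X i \<longleftrightarrow> i = 0"
  by (cases "(X, i)" rule: Gam.cases) auto

lemma Gen_in_Gam_iff [simp]: "Gen x \<in> Gam X i \<longleftrightarrow> i = 1 \<and> x \<in> X"
  by (cases "(X, i)" rule: Gam.cases) auto

lemma Tr_in_Gam_iff [simp]:
  "Tr l c r \<in> Gam X i \<longleftrightarrow> (\<exists>j. i = Suc (Suc j) \<and> l \<in> Gam X (Suc j) \<and> c \<in> Gam X j
     \<and> r \<in> Gam X (Suc j) \<and> l \<noteq> r \<and> c \<in> {gl l, gr l} \<and> c \<in> {gl r, gr r})"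
  by (cases "(X, i)" rule: Gam.cases) auto

lemma Gam_level_unique: "g \<in> Gam X i \<Longrightarrow> g \<in> Gam X j \<Longrightarrow> i = j"
  by (induction g arbitrary: i j) auto

lemma in_GamAll: "g \<in> Gam X i \<Longrightarrow> g \<in> GamAll X"
  unfolding GamAll_def by blast

lemma One_in_GamAll [simp]: "One \<in> GamAll X"
  using in_GamAll[of One X 0] by simp

lemma Gam_ge2_obtain_Tr:
  assumes "2 \<le> i" "g \<in> Gam X i"
  obtains l c r where "g = Tr l c r" "Tr l c r \<in> GamAll X"
proof (cases g)
  case (Tr l c r)
  then show thesis using that in_GamAll[OF assms(2)] by simp
qed (use assms in auto)

lemma Tr_in_GamAll_D:
  assumes "Tr l c r \<in> GamAll X"
  shows "\<exists>j. Tr l c r \<in> Gam X (Suc (Suc j))" and "c \<in> GamAll X"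
  using assms by (auto simp: GamAll_def)

definition child :: "'x set \<Rightarrow> 'x gam \<Rightarrow> 'x gam \<Rightarrow> bool" where
  "child X p q \<longleftrightarrow> (\<exists>j. p \<in> Gam X (Suc j) \<and> q \<in> Gam X j \<and> q \<in> {gl p, gr p})"

lemma child_in_GamAll: "child X p q \<Longrightarrow> p \<in> GamAll X \<and> q \<in> GamAll X"
  unfolding child_def using in_GamAll by blast

lemma child_Tr_iff: "child X (Tr l c r) d \<longleftrightarrow> Tr l c r \<in> GamAll X \<and> (d = l \<or> d = r)"
  unfolding child_def GamAll_def by auto

lemma child_Gen_iff: "child X (Gen x) d \<longleftrightarrow> x \<in> X \<and> d = One"
  unfolding child_def by auto

lemma child_One: "\<not> child X One d"
  unfolding child_def by simp

lemma Tr_in_GamAll_children: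
  assumes "Tr l c r \<in> GamAll X"
  shows "child X l c" "child X r c"
  using assms unfolding child_def GamAll_def by auto

lemma common_child_Tr:
  assumes "child X q e" "child X v e" "q \<noteq> v"
  shows "Tr v e q \<in> GamAll X"
proof -
  obtain j j' where q: "q \<in> Gam X (Suc j)" "e \<in> Gam X j" "e \<in> {gl q, gr q}"
    and v: "v \<in> Gam X (Suc j')" "e \<in> Gam X j'" "e \<in> {gl v, gr v}"
    using assms(1,2) unfolding child_def by blast
  have "j' = j" using Gam_level_unique q(2) v(2) by blast
  then have "Tr v e q \<in> Gam X (Suc (Suc j))" using q v assms(3) by auto
  then show ?thesis by (rule in_GamAll)
qed

lemma descent_in_GamAll: "successively (child X) (p # w) \<Longrightarrow> set w \<subseteq> GamAll X"
  by (induction w arbitrary: p) (auto dest: child_in_GamAll)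

definition mountain :: "'x set \<Rightarrow> 'x gam list \<Rightarrow> bool" where
  "mountain X m \<longleftrightarrow> (\<exists>A p D. m = A @ p # D \<and> p \<in> GamAll X
     \<and> successively (child X)\<inverse>\<inverse> (A @ [p]) \<and> successively (child X) (p # D))"

lemma mountainI:
  "m = A @ p # D \<Longrightarrow> p \<in> GamAll X \<Longrightarrow> successively (child X)\<inverse>\<inverse> (A @ [p])
    \<Longrightarrow> successively (child X) (p # D) \<Longrightarrow> mountain X m"
  unfolding mountain_def by blast

lemma mountainE:
  assumes "mountain X m"
  obtains A p D where "m = A @ p # D" "p \<in> GamAll X"
    "successively (child X)\<inverse>\<inverse> (A @ [p])" "successively (child X) (p # D)"
  using assms unfolding mountain_def by blast

lemma mountain_nonempty: "mountain X m \<Longrightarrow> m \<noteq> []"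
  by (auto elim: mountainE)

lemma mountain_in_GamAll:
  assumes "mountain X m"
  shows "set m \<subseteq> GamAll X"
proof -
  obtain A p D where m: "m = A @ p # D" "p \<in> GamAll X"
    and up: "successively (child X)\<inverse>\<inverse> (A @ [p])" and down: "successively (child X) (p # D)"
    using assms by (rule mountainE)
  have "successively (child X) (p # rev A)"
    using up successively_rev[of "child X" "A @ [p]"] by simp
  then show ?thesis using m descent_in_GamAll[OF down] descent_in_GamAll[of X p "rev A"] by auto
qed

lemma mountain_singleton: "g \<in> GamAll X \<Longrightarrow> mountain X [g]"
  by (rule mountainI[of _ "[]" g "[]"]) auto

lemma mountain_append_descent:
  assumes "mountain X m" "successively (child X) (last m # w)"
  shows "mountain X (m @ w)"
proof -
  obtain A p D where m: "m = A @ p # D" "p \<in> GamAll X"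
    and up: "successively (child X)\<inverse>\<inverse> (A @ [p])" and down: "successively (child X) (p # D)"
    using assms(1) by (rule mountainE)
  have "last m = last (p # D)" using m by simp
  then have "successively (child X) (p # D @ w)"
    using down assms(2) successively_append_iff[of "child X" "p # D" w] by (cases w) auto
  then show ?thesis using m up by (intro mountainI[of _ A p "D @ w"]) auto
qed

lemma mountain_cases:
  assumes "mountain X m"
  obtains (ascent) "successively (child X)\<inverse>\<inverse> m"
    | (descent) m' e where "m = m' @ [e]" "mountain X m'" "child X (last m') e"
proof -
  obtain A p D where m: "m = A @ p # D" "p \<in> GamAll X"
    and up: "successively (child X)\<inverse>\<inverse> (A @ [p])" and down: "successively (child X) (p # D)"
    using assms by (rule mountainE)
  show thesis
  proof (cases D rule: rev_cases)
    case Nil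
    then show thesis using m up ascent by simp
  next
    case (snoc D' e)
    have "mountain X (A @ p # D')"
      using m up down snoc successively_append_iff[of "child X" "p # D'" "[e]"]
      by (intro mountainI[of _ A p D']) auto
    moreover have "child X (last (A @ p # D')) e"
      using down snoc successively_append_iff[of "child X" "p # D'" "[e]"] by simp
    ultimately show thesis using descent m snoc by simp
  qed
qed

locale skeleton_map =
  fixes X :: "'x set" and \<phi> :: "'x gam \<Rightarrow> 'a::semigroup_mult option"
  assumes skeleton: "skeleton X \<phi>"
begin

lemma idem: "g \<in> GamAll X \<Longrightarrow> \<phi> g * \<phi> g = \<phi> g"
  using skeleton unfolding skeleton_def E1_def by (auto simp: mult1_eq_times)

lemma in_S1: "g \<in> GamAll X \<Longrightarrow> \<phi> g \<in> S1"
  using skeleton unfolding skeleton_def E1_def by auto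

lemma sandwich_Tr:
  assumes "Tr l c r \<in> GamAll X"
  shows "\<phi> c * \<phi> l * \<phi> (Tr l c r) = \<phi> (Tr l c r)"
    and "\<phi> (Tr l c r) * \<phi> r * \<phi> c = \<phi> (Tr l c r)"
    and "\<phi> r * \<phi> c * \<phi> (Tr l c r) * \<phi> c * \<phi> l = \<phi> r * \<phi> c * \<phi> l"
proof -
  obtain j where j: "Tr l c r \<in> Gam X (Suc (Suc j))" using Tr_in_GamAll_D(1)[OF assms] ..
  have "\<forall>i \<ge> 2. \<forall>g \<in> Gam X i. \<phi> g \<in> sandwich (\<phi> (gr g) * \<phi> (gc g)) (\<phi> (gc g) * \<phi> (gl g))"
    using skeleton unfolding skeleton_def mult1_eq_times by blast
  from this[rule_format, OF _ j]
  have "\<phi> (Tr l c r) \<in> sandwich (\<phi> r * \<phi> c) (\<phi> c * \<phi> l)" by simp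
  moreover have "\<phi> c * (\<phi> c * \<phi> l) = \<phi> c * \<phi> l"
    using idem[OF Tr_in_GamAll_D(2)[OF assms]] by (simp flip: mult.assoc)
  ultimately show "\<phi> c * \<phi> l * \<phi> (Tr l c r) = \<phi> (Tr l c r)"
    and "\<phi> (Tr l c r) * \<phi> r * \<phi> c = \<phi> (Tr l c r)"
    and "\<phi> r * \<phi> c * \<phi> (Tr l c r) * \<phi> c * \<phi> l = \<phi> r * \<phi> c * \<phi> l"
    unfolding sandwich_def mult1_eq_times by (simp_all add: mult.assoc)
qed

lemma left_unit_of_centre:
  assumes "Tr l c r \<in> GamAll X" "a * \<phi> c = \<phi> c"
  shows "a * \<phi> (Tr l c r) = \<phi> (Tr l c r)"
proof -
  have "a * \<phi> (Tr l c r) = (a * \<phi> c) * \<phi> l * \<phi> (Tr l c r)"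
    by (subst sandwich_Tr(1)[OF assms(1), symmetric]) (simp add: mult.assoc)
  then show ?thesis unfolding assms(2) sandwich_Tr(1)[OF assms(1)] .
qed

lemma right_unit_of_centre:
  assumes "Tr l c r \<in> GamAll X" "\<phi> c * a = \<phi> c"
  shows "\<phi> (Tr l c r) * a = \<phi> (Tr l c r)"
proof -
  have "\<phi> (Tr l c r) * a = \<phi> (Tr l c r) * \<phi> r * (\<phi> c * a)"
    by (subst sandwich_Tr(2)[OF assms(1), symmetric]) (simp add: mult.assoc)
  then show ?thesis unfolding assms(2) sandwich_Tr(2)[OF assms(1)] .
qed

lemma One_neutral: "g \<in> GamAll X \<Longrightarrow> \<phi> One * \<phi> g = \<phi> g \<and> \<phi> g * \<phi> One = \<phi> g"
proof (induction g)
  case One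
  then show ?case using idem by simp
next
  case (Gen x)
  then have "x \<in> X" unfolding GamAll_def by simp
  then show ?case using skeleton unfolding skeleton_def mult1_eq_times by blast
next
  case (Tr l c r)
  then show ?case
    using left_unit_of_centre right_unit_of_centre Tr_in_GamAll_D(2) by blast
qed

lemma peak_to_valley:
  assumes "Tr l c r \<in> GamAll X"
  shows "\<phi> r * \<phi> (Tr l c r) * \<phi> l = \<phi> r * \<phi> c * \<phi> l"
proof -
  have c: "\<phi> c * \<phi> c = \<phi> c" using idem Tr_in_GamAll_D(2)[OF assms] .
  have "\<phi> r * \<phi> (Tr l c r) * \<phi> l = \<phi> r * \<phi> c * \<phi> (Tr l c r) * \<phi> c * \<phi> l"
    using left_unit_of_centre[OF assms c] right_unit_of_centre[OF assms c]
    by (simp add: mult.assoc)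
  then show ?thesis using sandwich_Tr(3)[OF assms] by simp
qed

lemma parent_child_parent: "child X p d \<Longrightarrow> \<phi> p * \<phi> d * \<phi> p = \<phi> p"
proof (induction p arbitrary: d)
  case One
  then show ?case by (simp add: child_One)
next
  case (Gen x)
  then have "d = One" "Gen x \<in> GamAll X"
    using child_in_GamAll[OF Gen.prems] by (auto simp: child_Gen_iff)
  then show ?case using idem One_neutral by simp
next
  case (Tr l c r)
  define g where "g = Tr l c r"
  have Tr: "Tr l c r \<in> GamAll X" and d: "d = l \<or> d = r"
    using Tr.prems unfolding child_Tr_iff by auto
  note sw = sandwich_Tr[OF Tr, folded g_def]
  have g: "g \<in> GamAll X" using Tr unfolding g_def .
  have l: "\<phi> l * \<phi> c * \<phi> l = \<phi> l" and r: "\<phi> r * \<phi> c * \<phi> r = \<phi> r"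
    using Tr.IH(1,3) Tr_in_GamAll_children[OF Tr] by auto
  have key: "\<phi> g * \<phi> r * \<phi> c * \<phi> l * \<phi> g = \<phi> g"
  proof -
    have "\<phi> g * \<phi> r * \<phi> c * \<phi> l * \<phi> g = \<phi> g * (\<phi> r * \<phi> c * \<phi> g * \<phi> c * \<phi> l) * \<phi> g"
      unfolding sw(3) by (simp add: mult.assoc)
    also have "\<dots> = (\<phi> g * \<phi> r * \<phi> c) * \<phi> g * (\<phi> c * \<phi> l * \<phi> g)"
      by (simp add: mult.assoc)
    finally show ?thesis unfolding sw(1,2) idem[OF g] .
  qed
  have "\<phi> g * \<phi> d * \<phi> g = (\<phi> g * \<phi> r * \<phi> c) * \<phi> d * (\<phi> c * \<phi> l * \<phi> g)"
    unfolding sw(1,2) ..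
  also have "\<dots> = \<phi> g * \<phi> r * \<phi> c * \<phi> l * \<phi> g"
  proof (cases "d = l")
    case True
    then have "(\<phi> g * \<phi> r * \<phi> c) * \<phi> d * (\<phi> c * \<phi> l * \<phi> g)
        = \<phi> g * \<phi> r * \<phi> c * (\<phi> l * \<phi> c * \<phi> l) * \<phi> g"
      by (simp add: mult.assoc)
    then show ?thesis unfolding l .
  next
    case False
    then have "(\<phi> g * \<phi> r * \<phi> c) * \<phi> d * (\<phi> c * \<phi> l * \<phi> g)
        = \<phi> g * (\<phi> r * \<phi> c * \<phi> r) * \<phi> c * \<phi> l * \<phi> g"
      using d by (simp add: mult.assoc)
    then show ?thesis unfolding r .
  qed
  also have "\<dots> = \<phi> g" by (rule key)
  finally show ?case unfolding g_def .
qed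

lemma descent_prod_rev:
  assumes "p \<in> GamAll X" "successively (child X) (p # D)"
  shows "\<phi> p * prod_list (map \<phi> D) * prod_list (map \<phi> (rev D)) * \<phi> p = \<phi> p"
  using assms
proof (induction D arbitrary: p)
  case Nil
  then show ?case using idem by simp
next
  case (Cons d D)
  have pd: "child X p d" and down: "successively (child X) (d # D)" using Cons.prems(2) by auto
  have "d \<in> GamAll X" using child_in_GamAll[OF pd] by blast
  note IH = Cons.IH[OF this down]
  have "\<phi> p * prod_list (map \<phi> (d # D)) * prod_list (map \<phi> (rev (d # D))) * \<phi> p
      = \<phi> p * (\<phi> d * prod_list (map \<phi> D) * prod_list (map \<phi> (rev D)) * \<phi> d) * \<phi> p"
    by (simp add: mult.assoc)
  also have "\<dots> = \<phi> p" unfolding IH using parent_child_parent[OF pd] .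
  finally show ?case .
qed

lemma mountain_regular:
  assumes "mountain X m"
  shows "prod_list (map \<phi> m) * prod_list (map \<phi> (rev m)) * prod_list (map \<phi> m)
    = prod_list (map \<phi> m)"
proof -
  obtain A p D where m: "m = A @ p # D" "p \<in> GamAll X"
    and up: "successively (child X)\<inverse>\<inverse> (A @ [p])" and down: "successively (child X) (p # D)"
    using assms by (rule mountainE)
  have "successively (child X) (p # rev A)"
    using up successively_rev[of "child X" "A @ [p]"] by simp
  from descent_prod_rev[OF m(2) this]
  have A: "\<phi> p * prod_list (map \<phi> (rev A)) * prod_list (map \<phi> A) * \<phi> p = \<phi> p" by simp
  have D: "\<phi> p * prod_list (map \<phi> D) * prod_list (map \<phi> (rev D)) * \<phi> p = \<phi> p"
    using descent_prod_rev[OF m(2) down] .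
  have "prod_list (map \<phi> m) * prod_list (map \<phi> (rev m)) * prod_list (map \<phi> m)
    = prod_list (map \<phi> A) * (\<phi> p * prod_list (map \<phi> D) * prod_list (map \<phi> (rev D)) * \<phi> p)
      * prod_list (map \<phi> (rev A)) * prod_list (map \<phi> A) * \<phi> p * prod_list (map \<phi> D)"
    unfolding m by (simp add: mult.assoc)
  also have "\<dots> = prod_list (map \<phi> A)
      * (\<phi> p * prod_list (map \<phi> (rev A)) * prod_list (map \<phi> A) * \<phi> p) * prod_list (map \<phi> D)"
    unfolding D by (simp add: mult.assoc)
  also have "\<dots> = prod_list (map \<phi> m)"
    unfolding A m by (simp add: mult.assoc)
  finally show ?thesis .
qed

lemma prod_return_to_parent:
  assumes "child X q e" "m \<noteq> []" "last m = q"
  shows "prod_list (map \<phi> (m @ [e])) * \<phi> q = prod_list (map \<phi> m)"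
proof -
  obtain m' where "m = m' @ [q]" using assms(2,3) by (cases m rule: rev_cases) auto
  then show ?thesis using parent_child_parent[OF assms(1)] by (simp add: mult.assoc)
qed

lemma prod_detour_through_Tr:
  assumes "Tr v e q \<in> GamAll X" "m \<noteq> []" "last m = q"
  shows "prod_list (map \<phi> (m @ [e])) * \<phi> v = prod_list (map \<phi> m) * \<phi> (Tr v e q) * \<phi> v"
proof -
  obtain m' where "m = m' @ [q]" using assms(2,3) by (cases m rule: rev_cases) auto
  then show ?thesis using peak_to_valley[OF assms(1)] by (simp add: mult.assoc)
qed

lemma mountain_snoc_parent:
  assumes "mountain X m" "child X v (last m)"
  shows "\<exists>m'. mountain X m' \<and> last m' = v \<and> prod_list (map \<phi> m') = prod_list (map \<phi> m) * \<phi> v"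
  using assms
proof (induction "length m" arbitrary: m v rule: less_induct)
  case less
  have v: "v \<in> GamAll X" using child_in_GamAll[OF less.prems(2)] by blast
  from less.prems(1) show ?case
  proof (cases rule: mountain_cases)
    case ascent
    have "successively (child X)\<inverse>\<inverse> (m @ [v])"
      using ascent less.prems(2) mountain_nonempty[OF less.prems(1)]
      by (simp add: successively_append_iff)
    then have "mountain X (m @ [v])" using v by (intro mountainI[of _ m v "[]"]) auto
    then show ?thesis by (intro exI[of _ "m @ [v]"]) simp
  next
    case (descent m0 e)
    have m0: "m0 \<noteq> []" using mountain_nonempty[OF descent(2)] .
    have qe: "child X (last m0) e" and ve: "child X v e" using descent less.prems(2) by auto
    show ?thesis
    proof (cases "last m0 = v")
      case True
      then show ?thesis using descent(1,2) prod_return_to_parent[OF qe m0] by auto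
    next
      case False
      define g where "g = Tr v e (last m0)"
      have g: "g \<in> GamAll X" unfolding g_def using common_child_Tr[OF qe ve] False by simp
      then have "child X g (last m0)" "child X g v" unfolding g_def child_Tr_iff by simp_all
      obtain m1 where m1: "mountain X m1" "last m1 = g"
        "prod_list (map \<phi> m1) = prod_list (map \<phi> m0) * \<phi> g"
        using less.hyps[of m0 g] descent \<open>child X g (last m0)\<close> by auto
      have "mountain X (m1 @ [v])"
        using mountain_append_descent[OF m1(1)] m1(2) \<open>child X g v\<close> by simp
      moreover have "prod_list (map \<phi> (m1 @ [v])) = prod_list (map \<phi> m) * \<phi> v"
        using m1(3) prod_detour_through_Tr[OF g[unfolded g_def] m0] descent(1) g_def by simp
      ultimately show ?thesis by (intro exI[of _ "m1 @ [v]"]) simp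
    qed
  qed
qed

lemma mountain_climb:
  assumes "mountain X m" "successively (child X)\<inverse>\<inverse> (last m # w)"
  shows "\<exists>m'. mountain X m' \<and> last m' = last (last m # w)
    \<and> prod_list (map \<phi> m') = prod_list (map \<phi> m) * prod_list (map \<phi> w)"
  using assms
proof (induction w arbitrary: m)
  case (Cons v w)
  have "child X v (last m)" and up: "successively (child X)\<inverse>\<inverse> (v # w)"
    using Cons.prems(2) by auto
  then obtain m1 where m1: "mountain X m1" "last m1 = v"
    "prod_list (map \<phi> m1) = prod_list (map \<phi> m) * \<phi> v"
    using mountain_snoc_parent Cons.prems(1) by blast
  then show ?case using Cons.IH[OF m1(1)] up by (auto simp: mult.assoc)
qed fastforce

lemma ascent_from_One:
  "g \<in> GamAll X \<Longrightarrow> \<exists>w. successively (child X)\<inverse>\<inverse> (One # w) \<and> last (One # w) = g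
     \<and> \<phi> One * prod_list (map \<phi> w) = \<phi> g"
proof (induction g)
  case (Gen x)
  then have "child X (Gen x) One" by (simp add: child_Gen_iff GamAll_def)
  then show ?case using One_neutral[OF Gen.prems] by (intro exI[of _ "[Gen x]"]) simp
next
  case (Tr l c r)
  obtain w where w: "successively (child X)\<inverse>\<inverse> (One # w)" "last (One # w) = c"
    "\<phi> One * prod_list (map \<phi> w) = \<phi> c"
    using Tr.IH(2) Tr_in_GamAll_D(2)[OF Tr.prems] by blast
  have "successively (child X)\<inverse>\<inverse> ((One # w) @ [l, Tr l c r])"
    unfolding successively_append_iff using w(1,2) Tr.prems Tr_in_GamAll_children(1)[OF Tr.prems]
    by (simp add: child_Tr_iff)
  moreover have "\<phi> One * prod_list (map \<phi> (w @ [l, Tr l c r])) = \<phi> (Tr l c r)"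
    using w(3) sandwich_Tr(1)[OF Tr.prems] by (simp flip: mult.assoc)
  ultimately show ?case by (intro exI[of _ "w @ [l, Tr l c r]"]) simp
qed (intro exI[of _ "[]"], simp)

lemma descent_to_One:
  "g \<in> GamAll X \<Longrightarrow> \<exists>w. successively (child X) (g # w) \<and> last (g # w) = One
     \<and> \<phi> g * prod_list (map \<phi> w) = \<phi> g"
proof (induction g)
  case (Gen x)
  then have "child X (Gen x) One" by (simp add: child_Gen_iff GamAll_def)
  then show ?case using One_neutral[OF Gen.prems] by (intro exI[of _ "[One]"]) simp
next
  case (Tr l c r)
  obtain w where w: "successively (child X) (c # w)" "last (c # w) = One"
    "\<phi> c * prod_list (map \<phi> w) = \<phi> c"
    using Tr.IH(2) Tr_in_GamAll_D(2)[OF Tr.prems] by blast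
  have "successively (child X) (Tr l c r # r # c # w)"
    using w(1) Tr.prems Tr_in_GamAll_children(2)[OF Tr.prems] by (simp add: child_Tr_iff)
  moreover have "\<phi> (Tr l c r) * prod_list (map \<phi> (r # c # w)) = \<phi> (Tr l c r)"
    using w(3) sandwich_Tr(2)[OF Tr.prems] by (simp flip: mult.assoc)
  ultimately show ?case using w(2) by (intro exI[of _ "r # c # w"]) simp
qed (intro exI[of _ "[]"], simp)

lemma prod_One_neutral:
  assumes "u \<noteq> []" "set u \<subseteq> GamAll X"
  shows "\<phi> One * prod_list (map \<phi> u) = prod_list (map \<phi> u)"
    and "prod_list (map \<phi> u) * \<phi> One = prod_list (map \<phi> u)"
proof -
  show "\<phi> One * prod_list (map \<phi> u) = prod_list (map \<phi> u)"
    using assms One_neutral by (cases u) (simp_all flip: mult.assoc)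
  show "prod_list (map \<phi> u) * \<phi> One = prod_list (map \<phi> u)"
    using assms One_neutral by (cases u rule: rev_cases) (simp_all add: mult.assoc)
qed

lemma word_mountain:
  "set u \<subseteq> GamAll X \<Longrightarrow>
     \<exists>m. mountain X m \<and> last m = One \<and> prod_list (map \<phi> m) = \<phi> One * prod_list (map \<phi> u)"
proof (induction u rule: rev_induct)
  case Nil
  show ?case using mountain_singleton[OF One_in_GamAll] by (intro exI[of _ "[One]"]) simp
next
  case (snoc g u)
  have g: "g \<in> GamAll X" using snoc.prems by simp
  obtain m where m: "mountain X m" "last m = One"
    "prod_list (map \<phi> m) = \<phi> One * prod_list (map \<phi> u)"
    using snoc by auto
  obtain up where up: "successively (child X)\<inverse>\<inverse> (One # up)" "last (One # up) = g"
    "\<phi> One * prod_list (map \<phi> up) = \<phi> g"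
    using ascent_from_One[OF g] by blast
  obtain down where down: "successively (child X) (g # down)" "last (g # down) = One"
    "\<phi> g * prod_list (map \<phi> down) = \<phi> g"
    using descent_to_One[OF g] by blast
  obtain m1 where m1: "mountain X m1" "last m1 = g"
    "prod_list (map \<phi> m1) = prod_list (map \<phi> m) * prod_list (map \<phi> up)"
    using mountain_climb[OF m(1)] m(2) up(1,2) by auto
  have "mountain X (m1 @ down)" using mountain_append_descent[OF m1(1)] m1(2) down(1) by simp
  moreover have "last (m1 @ down) = One"
    using m1(2) down(2) mountain_nonempty[OF m1(1)] by (cases down) auto
  moreover have "prod_list (map \<phi> (m1 @ down)) = \<phi> One * prod_list (map \<phi> (u @ [g]))"
  proof -
    have "prod_list (map \<phi> (m1 @ down))
        = prod_list (map \<phi> m) * \<phi> One * prod_list (map \<phi> up) * prod_list (map \<phi> down)"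
      using m1(3) prod_One_neutral(2)[OF mountain_nonempty[OF m(1)] mountain_in_GamAll[OF m(1)]]
      by (simp add: mult.assoc)
    also have "\<dots> = prod_list (map \<phi> m) * \<phi> g"
      using up(3) down(3) by (simp add: mult.assoc)
    finally show ?thesis using m(3) by (simp add: mult.assoc)
  qed
  ultimately show ?case by blast
qed

lemma regular_monoid_sgen: "regular_monoid_with_id (sgen (\<phi> ` GamAll X)) (\<phi> One)"
  unfolding regular_monoid_with_id_def mult1_eq_times
proof (intro conjI ballI)
  fix a b assume "a \<in> sgen (\<phi> ` GamAll X)" "b \<in> sgen (\<phi> ` GamAll X)"
  then show "a * b \<in> sgen (\<phi> ` GamAll X)" by (metis sgen.mult mult1_eq_times)
next
  show "\<phi> One \<in> sgen (\<phi> ` GamAll X)" by (simp add: sgen.base)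
next
  fix a assume "a \<in> sgen (\<phi> ` GamAll X)"
  then obtain u where u: "u \<noteq> []" "set u \<subseteq> GamAll X" "a = prod_list (map \<phi> u)"
    unfolding sgen_image_eq by blast
  then show "\<phi> One * a = a" "a * \<phi> One = a" using prod_One_neutral by auto
  obtain m where m: "mountain X m" "prod_list (map \<phi> m) = a"
    using word_mountain[OF u(2)] prod_One_neutral(1)[OF u(1,2)] u(3) by auto
  have "rev m \<noteq> []" "set (rev m) \<subseteq> GamAll X"
    using mountain_nonempty[OF m(1)] mountain_in_GamAll[OF m(1)] by auto
  then have "prod_list (map \<phi> (rev m)) \<in> sgen (\<phi> ` GamAll X)"
    unfolding sgen_image_eq by blast
  then show "\<exists>b \<in> sgen (\<phi> ` GamAll X). a * b * a = a"
    using mountain_regular[OF m(1)] m(2) by blast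
qed

lemma rho_prod_eq: "rho X u v \<Longrightarrow> prod_list (map \<phi> u) = prod_list (map \<phi> v)"
proof (induction rule: rho.induct)
  case (gen1 g)
  then show ?case using One_neutral by simp
next
  case (gen2 g)
  then show ?case using One_neutral by simp
next
  case (gen3 g)
  then show ?case using idem by simp
next
  case (gen4 i g)
  then obtain l c r where "g = Tr l c r" "Tr l c r \<in> GamAll X" by (rule Gam_ge2_obtain_Tr)
  then show ?case using sandwich_Tr(1) by (simp flip: mult.assoc)
next
  case (gen5 i g)
  then obtain l c r where "g = Tr l c r" "Tr l c r \<in> GamAll X" by (rule Gam_ge2_obtain_Tr)
  then show ?case using sandwich_Tr(2) by (simp flip: mult.assoc)
next
  case (gen6 i g)
  then obtain l c r where "g = Tr l c r" "Tr l c r \<in> GamAll X" by (rule Gam_ge2_obtain_Tr)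
  then show ?case using sandwich_Tr(3) by (simp flip: mult.assoc)
qed simp_all

end

definition induced_map :: "'x set \<Rightarrow> ('x gam list \<Rightarrow> 'b) \<Rightarrow> 'x gam list set \<Rightarrow> 'b" where
  "induced_map X f c = f (SOME u. u \<in> GPlus X \<and> c = rho_class X u)"

lemma induced_map_rho_class:
  assumes "\<And>u v. rho X u v \<Longrightarrow> f u = f v" "u \<in> GPlus X"
  shows "induced_map X f (rho_class X u) = f u"
proof -
  obtain u' where u': "u' \<in> GPlus X" "rho_class X u = rho_class X u'"
    and "induced_map X f (rho_class X u) = f u'"
    using someI_ex[of "\<lambda>u'. u' \<in> GPlus X \<and> rho_class X u = rho_class X u'"] assms(2)
    unfolding induced_map_def by blast
  moreover have "rho X u' u" using u'(2) rho.refl[OF assms(2)] unfolding rho_class_def by blast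
  ultimately show ?thesis using assms(1) by simp
qed

lemma ft_hom_rho_class:
  assumes "ft_hom X \<psi>" "u \<noteq> []" "set u \<subseteq> GamAll X"
  shows "\<psi> (rho_class X u) = prod_list (map (\<lambda>g. \<psi> (rho_class X [g])) u)"
  using assms(2,3)
proof (induction u rule: list_nonempty_induct)
  case (cons g u)
  then have "[g] \<in> GPlus X" "u \<in> GPlus X" by (auto simp: GPlus_def)
  then have "\<psi> (rho_class X ([g] @ u)) = \<psi> (rho_class X [g]) * \<psi> (rho_class X u)"
    using assms(1) unfolding ft_hom_def mult1_eq_times by blast
  then show ?case using cons by simp
qed simp_all

theorem proposition5p1:
  fixes X :: "'x set" and \<phi> :: "'x gam \<Rightarrow> 'a::semigroup_mult option"
  assumes "X \<noteq> {}" and "skeleton X \<phi>"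
  shows "\<exists>\<psi>. ft_hom X \<psi> \<and> (\<forall>g \<in> GamAll X. \<psi> (rho_class X [g]) = \<phi> g)
           \<and> (\<forall>\<psi>'. ft_hom X \<psi>' \<and> (\<forall>g \<in> GamAll X. \<psi>' (rho_class X [g]) = \<phi> g)
                   \<longrightarrow> (\<forall>c \<in> FT X. \<psi>' c = \<psi> c))
           \<and> sgen (\<phi> ` GamAll X) = \<psi> ` FT X
           \<and> regular_monoid_with_id (sgen (\<phi> ` GamAll X)) (\<phi> One)"
proof -
  interpret skeleton_map X \<phi> by (rule skeleton_map.intro) (fact assms(2))
  define \<psi> where "\<psi> = induced_map X (\<lambda>u. prod_list (map \<phi> u))"
  have \<psi>_class: "\<psi> (rho_class X u) = prod_list (map \<phi> u)" if "u \<in> GPlus X" for u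
    unfolding \<psi>_def using induced_map_rho_class[OF rho_prod_eq that] .
  have image: "\<psi> ` FT X = sgen (\<phi> ` GamAll X)"
    unfolding FT_def sgen_image_eq image_image using \<psi>_class by (auto simp: GPlus_def)
  have hom: "ft_hom X \<psi>"
    unfolding ft_hom_def mult1_eq_times
  proof (intro conjI ballI)
    fix c assume "c \<in> FT X"
    then show "\<psi> c \<in> S1" using image sgen_subset_S1 in_S1 by blast
  next
    fix u v assume "u \<in> GPlus X" "v \<in> GPlus X"
    then show "\<psi> (rho_class X (u @ v)) = \<psi> (rho_class X u) * \<psi> (rho_class X v)"
      using \<psi>_class by (simp add: GPlus_def)
  qed
  have gen: "\<forall>g \<in> GamAll X. \<psi> (rho_class X [g]) = \<phi> g"
    using \<psi>_class by (simp add: GPlus_def)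
  have unique: "\<forall>c \<in> FT X. \<psi>' c = \<psi> c"
    if hom': "ft_hom X \<psi>'" and gen': "\<forall>g \<in> GamAll X. \<psi>' (rho_class X [g]) = \<phi> g" for \<psi>'
  proof
    fix c assume "c \<in> FT X"
    then obtain u where u: "u \<in> GPlus X" "c = rho_class X u" unfolding FT_def by auto
    then have "u \<noteq> []" "set u \<subseteq> GamAll X" by (auto simp: GPlus_def)
    then have "\<psi>' c = prod_list (map (\<lambda>g. \<psi>' (rho_class X [g])) u)"
      using ft_hom_rho_class[OF hom'] u(2) by simp
    also have "map (\<lambda>g. \<psi>' (rho_class X [g])) u = map \<phi> u"
      using gen' \<open>set u \<subseteq> GamAll X\<close> by auto
    finally show "\<psi>' c = \<psi> c" unfolding u(2) \<psi>_class[OF u(1)] .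
  qed
  show ?thesis
    by (rule exI[of _ \<psi>]) (use hom gen unique image regular_monoid_sgen in blast)
qed

end
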